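(* $\frac{2}{11}\le\gamma^{L-LD}(\mathcal{T})\le\frac29$: every local locating-dominating code in the triangular grid has density at least $2/11$, and there is a local locating-dominating code in the triangular grid of density $2/9$.
   Context: The triangular grid $\mathcal{T}$ has vertex set $\mathbb{Z}^2$, with $\mathbf{u},\mathbf{v}$ adjacent iff $\mathbf{u}-\mathbf{v}\in\{(\pm1,0),(0,\pm1),(1,1),(-1,-1)\}$. For a nonempty $C\subseteq\mathbb{Z}^2$ and vertex $\mathbf{u}$, $I(\mathbf{u})=N[\mathbf{u}]\cap C$ where $N[\mathbf{u}]$ is the closed neighbourhood. $C$ is a local locating-dominating code if $I(\mathbf{u})\ne\emptyset$ for all $\mathbf{u}$ and $I(\mathbf{u})\ne I(\mathbf{v})$ for all adjacent $\mathbf{u},\mathbf{v}\notin C$. The density of $C$ is $D(C)=\limsup_{n\to\infty}|C\cap Q_n|/|Q_n|$ with $Q_n=\{(i,j)\in\mathbb{Z}^2:|i|\le n,|j|\le n\}$. $\gamma^{L-LD}(G)$ denotes the infimum of densities of local locating-dominating codes in $G$. *)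

theory Defs
  imports "HOL-Analysis.Analysis"
begin

definition tri_adj :: "int \<times> int \<Rightarrow> int \<times> int \<Rightarrow> bool" where
  "tri_adj u v \<longleftrightarrow> (fst u - fst v, snd u - snd v) \<in>
     {(1,0), (-1,0), (0,1), (0,-1), (1,1), (-1,-1)}"

definition tri_closed_nbhd :: "int \<times> int \<Rightarrow> (int \<times> int) set" where
  "tri_closed_nbhd u = insert u {v. tri_adj u v}"

definition I_set :: "(int \<times> int) set \<Rightarrow> int \<times> int \<Rightarrow> (int \<times> int) set" where
  "I_set C u = tri_closed_nbhd u \<inter> C"

definition local_LD_code :: "(int \<times> int) set \<Rightarrow> bool" where
  "local_LD_code C \<longleftrightarrow> C \<noteq> {} \<and>
     (\<forall>u. I_set C u \<noteq> {}) \<and>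
     (\<forall>u v. tri_adj u v \<and> u \<notin> C \<and> v \<notin> C \<longrightarrow> I_set C u \<noteq> I_set C v)"

definition Q :: "nat \<Rightarrow> (int \<times> int) set" where
  "Q n = {-int n..int n} \<times> {-int n..int n}"

definition density :: "(int \<times> int) set \<Rightarrow> ereal" where
  "density C = limsup (\<lambda>n. ereal (real (card (C \<inter> Q n)) / real (card (Q n))))"

definition gamma_LLD :: ereal where
  "gamma_LLD = Inf (density ` {C. local_LD_code C})"

end

theory Submission
  imports Defs "HOL-Real_Asymp.Real_Asymp"
begin

text \<open>
  Lower bound, by discharging: every vertex \<open>u\<close> sends charge \<open>1 / |I(u)|\<close> to each codeword
  of \<open>I(u)\<close>, so the total charge equals the number of vertices. A codeword \<open>c\<close> is charged only
  by its closed neighbourhood: by at most 1 from itself, and by its six neighbours, which form a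
  6-cycle. A neighbour \<open>u\<close> sends 1 if \<open>I(u) = {c}\<close> and at most 1/2 otherwise, and two adjacent
  non-codewords cannot both have \<open>I = {c}\<close>; so at most three neighbours send 1 and \<open>c\<close> receives at
  most \<open>1 + 3 + 3/2 = 11/2\<close>.

  Upper bound: the points \<open>(x, y)\<close> with \<open>x \<equiv> 0\<close> and \<open>y \<not>\<equiv> 2 (mod 3)\<close> form a local
  locating-dominating code meeting every \<open>3 \<times> 3\<close> box in exactly two points.
\<close>

lemma card_le_by_discharging:
  fixes I :: "'a \<Rightarrow> 'b set" and K :: real
  assumes "finite A" "finite D"
    and "\<And>u. u \<in> A \<Longrightarrow> I u \<subseteq> D" "\<And>u. u \<in> A \<Longrightarrow> finite (I u) \<and> I u \<noteq> {}"
    and "\<And>c. c \<in> D \<Longrightarrow> (\<Sum>u\<in>{u\<in>A. c \<in> I u}. 1 / real (card (I u))) \<le> K"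
  shows "real (card A) \<le> K * real (card D)"
proof -
  have "real (card A) = (\<Sum>u\<in>A. \<Sum>c\<in>{c\<in>D. c \<in> I u}. 1 / real (card (I u)))"
  proof -
    have "(\<Sum>c\<in>{c\<in>D. c \<in> I u}. 1 / real (card (I u))) = 1" if "u \<in> A" for u
    proof -
      have "{c\<in>D. c \<in> I u} = I u" using assms(3)[OF that] by blast
      moreover have "card (I u) > 0" using assms(4)[OF that] by (simp add: card_gt_0_iff)
      ultimately show ?thesis by simp
    qed
    then have "(\<Sum>u\<in>A. \<Sum>c\<in>{c\<in>D. c \<in> I u}. 1 / real (card (I u))) = (\<Sum>u\<in>A. 1)"
      by (rule sum.cong[OF refl])
    then show ?thesis by simp
  qed
  also have "\<dots> = (\<Sum>c\<in>D. \<Sum>u\<in>{u\<in>A. c \<in> I u}. 1 / real (card (I u)))"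
    by (rule sum.swap_restrict[OF assms(1,2)])
  also have "\<dots> \<le> (\<Sum>c\<in>D. K)"
    by (rule sum_mono) (rule assms(5))
  finally show ?thesis by (simp add: mult.commute)
qed

lemma sum_card_Int_swap:
  assumes "finite A" "finite D" "\<And>u. u \<in> A \<Longrightarrow> R u \<subseteq> D"
  shows "(\<Sum>u\<in>A. card (R u \<inter> C)) = (\<Sum>c\<in>C \<inter> D. card {u\<in>A. c \<in> R u})"
proof -
  have "card (R u \<inter> C) = (\<Sum>c\<in>{c\<in>C \<inter> D. c \<in> R u}. 1)" if "u \<in> A" for u
  proof -
    have "{c\<in>C \<inter> D. c \<in> R u} = R u \<inter> C" using assms(3)[OF that] by blast
    then show ?thesis by simp
  qed
  then have "(\<Sum>u\<in>A. card (R u \<inter> C)) = (\<Sum>u\<in>A. \<Sum>c\<in>{c\<in>C \<inter> D. c \<in> R u}. 1)"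
    by (rule sum.cong[OF refl])
  also have "\<dots> = (\<Sum>c\<in>C \<inter> D. \<Sum>u\<in>{u\<in>A. c \<in> R u}. 1)"
    using assms(1,2) by (intro sum.swap_restrict) auto
  also have "\<dots> = (\<Sum>c\<in>C \<inter> D. card {u\<in>A. c \<in> R u})"
    by simp
  finally show ?thesis .
qed

text \<open>The nonzero offsets are listed in cyclic order, so consecutive ones are adjacent.\<close>

definition tri_offsets :: "(int \<times> int) set" where
  "tri_offsets = {(0, 0), (1, 0), (1, 1), (0, 1), (-1, 0), (-1, -1), (0, -1)}"

lemma tri_offsets_Diff_zero:
  "tri_offsets - {(0, 0)} = {(1, 0), (-1, 0), (0, 1), (0, -1), (1, 1), (-1, -1)}"
  unfolding tri_offsets_def by auto

lemma uminus_mem_tri_offsets: "(- a, - b) \<in> tri_offsets \<longleftrightarrow> (a, b) \<in> tri_offsets"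
  unfolding tri_offsets_def by (simp add: minus_equation_iff; blast)

lemma tri_adj_iff_offset:
  "tri_adj u v \<longleftrightarrow> (fst v - fst u, snd v - snd u) \<in> tri_offsets - {(0, 0)}"
proof -
  have "tri_adj u v \<longleftrightarrow> (- (fst v - fst u), - (snd v - snd u)) \<in> tri_offsets - {(0, 0)}"
    unfolding tri_adj_def tri_offsets_Diff_zero by simp
  also have "\<dots> \<longleftrightarrow> (fst v - fst u, snd v - snd u) \<in> tri_offsets - {(0, 0)}"
    using uminus_mem_tri_offsets[of "fst v - fst u" "snd v - snd u"] by auto
  finally show ?thesis .
qed

lemma tri_adj_sym: "tri_adj u v \<longleftrightarrow> tri_adj v u"
proof -
  have "tri_adj v u \<longleftrightarrow> (fst u - fst v, snd u - snd v) \<in> tri_offsets - {(0, 0)}"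
    by (rule tri_adj_iff_offset)
  also have "\<dots> \<longleftrightarrow> tri_adj u v"
    unfolding tri_adj_def tri_offsets_Diff_zero by simp
  finally show ?thesis by (rule sym)
qed

lemma mem_tri_closed_nbhd_iff:
  "w \<in> tri_closed_nbhd u \<longleftrightarrow> (fst w - fst u, snd w - snd u) \<in> tri_offsets"
proof -
  have "w = u \<longleftrightarrow> (fst w - fst u, snd w - snd u) = (0, 0)" by (cases u; cases w) simp
  moreover have "(0, 0) \<in> tri_offsets" by (simp add: tri_offsets_def)
  ultimately show ?thesis unfolding tri_closed_nbhd_def tri_adj_iff_offset by auto
qed

lemma tri_closed_nbhd_image:
  "tri_closed_nbhd u = (\<lambda>d. (fst u + fst d, snd u + snd d)) ` tri_offsets"
proof (rule set_eqI)
  fix w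
  have "(fst w - fst u, snd w - snd u) \<in> tri_offsets \<longleftrightarrow>
      (\<exists>d\<in>tri_offsets. w = (fst u + fst d, snd u + snd d))"
  proof
    assume "(fst w - fst u, snd w - snd u) \<in> tri_offsets"
    then show "\<exists>d\<in>tri_offsets. w = (fst u + fst d, snd u + snd d)"
      by (intro bexI[of _ "(fst w - fst u, snd w - snd u)"]) auto
  qed auto
  then show "w \<in> tri_closed_nbhd u \<longleftrightarrow> w \<in> (\<lambda>d. (fst u + fst d, snd u + snd d)) ` tri_offsets"
    unfolding mem_tri_closed_nbhd_iff image_iff .
qed

lemma tri_closed_nbhd_eq:
  "tri_closed_nbhd (x, y) =
     {(x, y), (x + 1, y), (x + 1, y + 1), (x, y + 1), (x - 1, y), (x - 1, y - 1), (x, y - 1)}"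
  unfolding tri_closed_nbhd_image tri_offsets_def by simp

lemma tri_closed_nbhd_sym: "v \<in> tri_closed_nbhd u \<longleftrightarrow> u \<in> tri_closed_nbhd v"
  unfolding tri_closed_nbhd_def using tri_adj_sym by auto

lemma finite_tri_closed_nbhd: "finite (tri_closed_nbhd u)"
  by (cases u) (simp add: tri_closed_nbhd_eq)

lemma finite_I_set: "finite (I_set C u)"
  unfolding I_set_def using finite_tri_closed_nbhd by simp

lemma finite_Q: "finite (Q n)"
  unfolding Q_def by simp

lemma card_Q: "real (card (Q n)) = (2 * real n + 1)\<^sup>2"
  unfolding Q_def by (simp add: card_cartesian_product power2_eq_square)

lemma Q_mono: "m \<le> n \<Longrightarrow> Q m \<subseteq> Q n"
  unfolding Q_def by auto

lemma limsup_ge_of_tendsto: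
  assumes "eventually (\<lambda>n. l n \<le> g n) sequentially" "l \<longlonglongrightarrow> L"
  shows "ereal L \<le> limsup (\<lambda>n. ereal (g n))"
proof -
  have "limsup (\<lambda>n. ereal (l n)) = ereal L"
    by (rule lim_imp_Limsup) (simp_all add: assms(2))
  moreover have "limsup (\<lambda>n. ereal (l n)) \<le> limsup (\<lambda>n. ereal (g n))"
    using assms(1) by (intro Limsup_mono) (auto elim: eventually_mono)
  ultimately show ?thesis by simp
qed

lemma limsup_le_of_tendsto:
  assumes "eventually (\<lambda>n. g n \<le> l n) sequentially" "l \<longlonglongrightarrow> L"
  shows "limsup (\<lambda>n. ereal (g n)) \<le> ereal L"
proof -
  have "limsup (\<lambda>n. ereal (l n)) = ereal L"
    by (rule lim_imp_Limsup) (simp_all add: assms(2))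
  moreover have "limsup (\<lambda>n. ereal (g n)) \<le> limsup (\<lambda>n. ereal (l n))"
    using assms(1) by (intro Limsup_mono) (auto elim: eventually_mono)
  ultimately show ?thesis by simp
qed

lemma density_ge_of_card_bound:
  assumes "\<And>n. a * real (card (Q n)) \<le> real (card (C \<inter> Q (n + k)))"
  shows "ereal a \<le> density C"
  unfolding density_def
proof (rule limsup_ge_of_tendsto)
  show "(\<lambda>n. a * (2 * real n - 2 * real k + 1)\<^sup>2 / (2 * real n + 1)\<^sup>2) \<longlonglongrightarrow> a"
    by real_asymp
  show "\<forall>\<^sub>F n in sequentially. a * (2 * real n - 2 * real k + 1)\<^sup>2 / (2 * real n + 1)\<^sup>2
      \<le> real (card (C \<inter> Q n)) / real (card (Q n))"
  proof (rule eventually_sequentiallyI[of k])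
    fix n assume "k \<le> n"
    then have "a * (2 * real n - 2 * real k + 1)\<^sup>2 \<le> real (card (C \<inter> Q n))"
      using assms[of "n - k"] by (simp add: card_Q)
    then show "a * (2 * real n - 2 * real k + 1)\<^sup>2 / (2 * real n + 1)\<^sup>2
        \<le> real (card (C \<inter> Q n)) / real (card (Q n))"
      unfolding card_Q by (intro divide_right_mono) auto
  qed
qed

lemma density_le_of_card_bound:
  assumes "\<And>n. real (card (C \<inter> Q n)) \<le> a * real (card (Q (n + k)))"
  shows "density C \<le> ereal a"
  unfolding density_def
proof (rule limsup_le_of_tendsto)
  show "(\<lambda>n. a * (2 * real n + 2 * real k + 1)\<^sup>2 / (2 * real n + 1)\<^sup>2) \<longlonglongrightarrow> a"
    by real_asymp
  show "\<forall>\<^sub>F n in sequentially. real (card (C \<inter> Q n)) / real (card (Q n))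
      \<le> a * (2 * real n + 2 * real k + 1)\<^sup>2 / (2 * real n + 1)\<^sup>2"
  proof (rule always_eventually, rule allI)
    fix n
    have "real (card (C \<inter> Q n)) \<le> a * (2 * real n + 2 * real k + 1)\<^sup>2"
      using assms[of n] by (simp add: card_Q)
    then show "real (card (C \<inter> Q n)) / real (card (Q n))
        \<le> a * (2 * real n + 2 * real k + 1)\<^sup>2 / (2 * real n + 1)\<^sup>2"
      unfolding card_Q by (intro divide_right_mono) auto
  qed
qed

section \<open>Lower bound\<close>

lemma one_div_card_I_set_le:
  assumes "c \<in> I_set C u"
  shows "1 / real (card (I_set C u)) \<le> (if I_set C u = {c} then 1 else 1/2)"
proof (cases "I_set C u = {c}")
  case False
  then obtain d where "d \<in> I_set C u" "d \<noteq> c" using assms by blast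
  then have "card {c, d} \<le> card (I_set C u)"
    using assms finite_I_set by (intro card_mono) auto
  then have "2 \<le> real (card (I_set C u))" using \<open>d \<noteq> c\<close> by simp
  then show ?thesis using False by (simp add: field_simps)
qed simp

lemma local_LD_code_adjacent_not_both_singleton:
  assumes "local_LD_code C" "tri_adj p q" "p \<noteq> c" "q \<noteq> c"
  shows "\<not> (I_set C p = {c} \<and> I_set C q = {c})"
proof
  assume singleton: "I_set C p = {c} \<and> I_set C q = {c}"
  then have "p \<notin> C" "q \<notin> C"
    using assms(3,4) unfolding I_set_def tri_closed_nbhd_def by blast+
  then have "I_set C p \<noteq> I_set C q" using assms(1,2) unfolding local_LD_code_def by blast
  then show False using singleton by simp
qed

lemma hexagon_charge_le:
  "\<not> (b1 \<and> b2) \<Longrightarrow> \<not> (b2 \<and> b3) \<Longrightarrow> \<not> (b3 \<and> b4) \<Longrightarrow> \<not> (b4 \<and> b5) \<Longrightarrow> \<not> (b5 \<and> b6) \<Longrightarrow>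
   \<not> (b6 \<and> b1) \<Longrightarrow>
   (if b0 then 1 else 1/2) + ((if b1 then 1 else 1/2) + ((if b2 then 1 else 1/2) +
   ((if b3 then 1 else 1/2) + ((if b4 then 1 else 1/2) + ((if b5 then 1 else 1/2) +
   (if b6 then 1 else 1/2)))))) \<le> (11/2 :: real)"
  by (cases b0; cases b1; cases b2; cases b3; cases b4; cases b5; cases b6) auto

lemma local_LD_code_charge_le:
  assumes "local_LD_code C" "c \<in> C"
  shows "(\<Sum>u\<in>{u\<in>A. c \<in> I_set C u}. 1 / real (card (I_set C u))) \<le> 11/2"
proof -
  obtain x y where c: "c = (x, y)" by (cases c)
  define g where "g u = (if I_set C u = {c} then 1 else (1/2 :: real))" for u
  have "{u\<in>A. c \<in> I_set C u} \<subseteq> tri_closed_nbhd c"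
    unfolding I_set_def using tri_closed_nbhd_sym by blast
  then have "(\<Sum>u\<in>{u\<in>A. c \<in> I_set C u}. 1 / real (card (I_set C u)))
      \<le> (\<Sum>u\<in>tri_closed_nbhd c. 1 / real (card (I_set C u)))"
    using finite_tri_closed_nbhd by (intro sum_mono2) auto
  also have "\<dots> \<le> (\<Sum>u\<in>tri_closed_nbhd c. g u)"
    using assms(2) tri_closed_nbhd_sym unfolding g_def
    by (intro sum_mono one_div_card_I_set_le) (simp add: I_set_def)
  also have "\<dots> = g (x, y) + (g (x + 1, y) + (g (x + 1, y + 1) + (g (x, y + 1) +
      (g (x - 1, y) + (g (x - 1, y - 1) + g (x, y - 1))))))"
    unfolding c tri_closed_nbhd_eq by simp
  also have "\<dots> \<le> 11/2"
    unfolding g_def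
    by (rule hexagon_charge_le;
        rule local_LD_code_adjacent_not_both_singleton[OF assms(1)]; simp add: c tri_adj_def)
  finally show ?thesis .
qed

lemma card_Q_le_local_LD_code:
  assumes "local_LD_code C"
  shows "real (card (Q n)) \<le> 11/2 * real (card (C \<inter> Q (Suc n)))"
proof (rule card_le_by_discharging[OF finite_Q])
  show "finite (C \<inter> Q (Suc n))" using finite_Q by simp
  show "I_set C u \<subseteq> C \<inter> Q (Suc n)" if "u \<in> Q n" for u
    using that unfolding I_set_def Q_def by (cases u) (auto simp: tri_closed_nbhd_eq)
  show "finite (I_set C u) \<and> I_set C u \<noteq> {}" for u
    using assms finite_I_set unfolding local_LD_code_def by blast
  show "(\<Sum>u\<in>{u\<in>Q n. c \<in> I_set C u}. 1 / real (card (I_set C u))) \<le> 11/2"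
    if "c \<in> C \<inter> Q (Suc n)" for c
    using local_LD_code_charge_le[OF assms] that by blast
qed

lemma density_local_LD_code_ge:
  assumes "local_LD_code C"
  shows "ereal (2/11) \<le> density C"
proof (rule density_ge_of_card_bound[where k = 1])
  show "2/11 * real (card (Q n)) \<le> real (card (C \<inter> Q (n + 1)))" for n
    using card_Q_le_local_LD_code[OF assms, of n] by simp
qed

section \<open>A code of density 2/9\<close>

definition periodic_code :: "(int \<times> int) set" where
  "periodic_code = {p. fst p mod 3 = 0 \<and> snd p mod 3 \<noteq> 2}"

lemma periodic_code_mod_shift:
  "(x mod 3 + i, y mod 3 + j) \<in> periodic_code \<longleftrightarrow> (x + i, y + j) \<in> periodic_code"
  unfolding periodic_code_def by (simp add: mod_add_left_eq)

lemma mod_3_cases: "(x :: int) mod 3 \<in> {0, 1, 2}"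
  by auto

text \<open>Since \<open>periodic_code\<close> is invariant under translations by \<open>3\<int>\<^sup>2\<close>, the code conditions
  need only be checked around base points with coordinates in \<open>{0, 1, 2}\<close>.\<close>

lemma periodic_code_dominates_residue:
  assumes "r \<in> {0, 1, 2}" "s \<in> {0, 1, 2}"
  shows "\<exists>(i, j)\<in>tri_offsets. (r + i, s + j) \<in> periodic_code"
  using assms unfolding tri_offsets_def
  by (simp only: insert_iff empty_iff; elim disjE) (simp_all add: periodic_code_def)

lemma periodic_code_separates_residue:
  assumes "r \<in> {0, 1, 2}" "s \<in> {0, 1, 2}" "(a, b) \<in> tri_offsets - {(0, 0)}"
    and "(r, s) \<notin> periodic_code" "(r + a, s + b) \<notin> periodic_code"
  shows "\<exists>i\<in>{-2, -1, 0, 1, 2}. \<exists>j\<in>{-2, -1, 0, 1, 2}. (r + i, s + j) \<in> periodic_code \<and>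
           ((i, j) \<in> tri_offsets \<longleftrightarrow> (i - a, j - b) \<notin> tri_offsets)"
  using assms unfolding tri_offsets_def
  by (simp only: insert_iff empty_iff prod.inject Diff_iff; elim disjE conjE)
     (simp_all add: periodic_code_def)

lemma local_LD_code_periodic_code: "local_LD_code periodic_code"
  unfolding local_LD_code_def
proof (intro conjI allI impI)
  have "(0, 0) \<in> periodic_code" unfolding periodic_code_def by simp
  then show "periodic_code \<noteq> {}" by blast
next
  fix u :: "int \<times> int"
  obtain x y where u: "u = (x, y)" by (cases u)
  obtain i j where "(i, j) \<in> tri_offsets" "(x mod 3 + i, y mod 3 + j) \<in> periodic_code"
    using periodic_code_dominates_residue[OF mod_3_cases mod_3_cases] by blast
  then have "(x + i, y + j) \<in> I_set periodic_code u"
    by (simp add: I_set_def u mem_tri_closed_nbhd_iff periodic_code_mod_shift)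
  then show "I_set periodic_code u \<noteq> {}" by blast
next
  fix u v :: "int \<times> int"
  assume adj: "tri_adj u v \<and> u \<notin> periodic_code \<and> v \<notin> periodic_code"
  obtain x y where u: "u = (x, y)" by (cases u)
  define a where "a = fst v - x"
  define b where "b = snd v - y"
  have v: "v = (x + a, y + b)" unfolding a_def b_def by simp
  have ab: "(a, b) \<in> tri_offsets - {(0, 0)}"
    using adj tri_adj_iff_offset[of u v] unfolding u a_def b_def by simp
  have "(x mod 3, y mod 3) \<notin> periodic_code" "(x mod 3 + a, y mod 3 + b) \<notin> periodic_code"
    using adj unfolding u v periodic_code_def by (simp_all add: mod_add_left_eq)
  from periodic_code_separates_residue[OF mod_3_cases mod_3_cases ab this] obtain i j
    where "(x mod 3 + i, y mod 3 + j) \<in> periodic_code"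
      and "(i, j) \<in> tri_offsets \<longleftrightarrow> (i - a, j - b) \<notin> tri_offsets"
    by blast
  then have "(x + i, y + j) \<in> periodic_code"
    and "(x + i, y + j) \<in> tri_closed_nbhd u \<longleftrightarrow> (x + i, y + j) \<notin> tri_closed_nbhd v"
    unfolding u v mem_tri_closed_nbhd_iff periodic_code_mod_shift by simp_all
  then show "I_set periodic_code u \<noteq> I_set periodic_code v"
    unfolding I_set_def by blast
qed

definition box3 :: "int \<times> int \<Rightarrow> (int \<times> int) set" where
  "box3 u = {fst u..fst u + 2} \<times> {snd u..snd u + 2}"

lemma finite_box3: "finite (box3 u)"
  unfolding box3_def by simp

lemma card_box3: "card (box3 u) = 9"
  unfolding box3_def by (simp add: card_cartesian_product)

lemma box3_preimage: "{u. c \<in> box3 u} = box3 (fst c - 2, snd c - 2)"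
  unfolding box3_def by (cases c) auto

lemma box3_subset_Q: "u \<in> Q n \<Longrightarrow> box3 u \<subseteq> Q (n + 2)"
  unfolding Q_def box3_def by (cases u) auto

lemma periodic_code_residue_box:
  assumes "r \<in> {0, 1, 2}" "s \<in> {0, 1, 2}"
  shows "(\<Sum>i\<in>{0, 1, 2 :: int}. \<Sum>j\<in>{0, 1, 2 :: int}.
           if (r + i, s + j) \<in> periodic_code then 1 else 0) = (2 :: nat)"
  using assms by (simp only: insert_iff empty_iff; elim disjE) (simp_all add: periodic_code_def)

lemma card_box3_Int_periodic_code: "card (box3 u \<inter> periodic_code) = 2"
proof -
  obtain x y where u: "u = (x, y)" by (cases u)
  have interval: "{z..z + 2} = (\<lambda>i. z + i) ` {0, 1, 2 :: int}" for z :: int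
  proof -
    have "{z..z + 2} = {z, z + 1, z + 2}" by auto
    then show ?thesis by simp
  qed
  have "card (box3 u \<inter> periodic_code) = (\<Sum>w\<in>box3 u. if w \<in> periodic_code then 1 else 0)"
    using sum.inter_restrict[OF finite_box3, of "\<lambda>_. 1 :: nat"] by simp
  also have "\<dots> = (\<Sum>a\<in>{x..x + 2}. \<Sum>b\<in>{y..y + 2}. if (a, b) \<in> periodic_code then 1 else 0)"
    unfolding box3_def u by (simp add: sum.cartesian_product)
  also have "\<dots> = (\<Sum>i\<in>{0, 1, 2}. \<Sum>j\<in>{0, 1, 2}. if (x + i, y + j) \<in> periodic_code then 1 else 0)"
    unfolding interval by (simp add: sum.reindex inj_on_def)
  also have "\<dots> = 2"
    using periodic_code_residue_box[OF mod_3_cases[of x] mod_3_cases[of y]]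
    by (simp only: periodic_code_mod_shift)
  finally show ?thesis .
qed

lemma periodic_code_count_ge: "2 * card (Q n) \<le> 9 * card (periodic_code \<inter> Q (n + 2))"
proof -
  have "2 * card (Q n) = (\<Sum>u\<in>Q n. card (box3 u \<inter> periodic_code))"
    by (simp add: card_box3_Int_periodic_code)
  also have "\<dots> = (\<Sum>c\<in>periodic_code \<inter> Q (n + 2). card {u\<in>Q n. c \<in> box3 u})"
    by (rule sum_card_Int_swap[OF finite_Q finite_Q box3_subset_Q])
  also have "\<dots> \<le> (\<Sum>c\<in>periodic_code \<inter> Q (n + 2). 9)"
  proof (rule sum_mono)
    fix c
    have "{u\<in>Q n. c \<in> box3 u} \<subseteq> box3 (fst c - 2, snd c - 2)"
      using box3_preimage by blast
    then show "card {u\<in>Q n. c \<in> box3 u} \<le> 9"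
      using card_mono[OF finite_box3] card_box3 by metis
  qed
  also have "\<dots> = 9 * card (periodic_code \<inter> Q (n + 2))"
    by simp
  finally show ?thesis .
qed

lemma periodic_code_count_le: "9 * card (periodic_code \<inter> Q n) \<le> 2 * card (Q (n + 2))"
proof -
  have "{u\<in>Q (n + 2). c \<in> box3 u} = box3 (fst c - 2, snd c - 2)" if "c \<in> Q n" for c
  proof -
    have "box3 (fst c - 2, snd c - 2) \<subseteq> Q (n + 2)"
      using that unfolding Q_def box3_def by (cases c) auto
    then show ?thesis using box3_preimage by blast
  qed
  then have "9 * card (periodic_code \<inter> Q n)
      = (\<Sum>c\<in>periodic_code \<inter> Q n. card {u\<in>Q (n + 2). c \<in> box3 u})"
    by (simp add: card_box3)
  also have "\<dots> \<le> (\<Sum>c\<in>periodic_code \<inter> Q (n + 2 + 2). card {u\<in>Q (n + 2). c \<in> box3 u})"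
    using Q_mono[of n "n + 2 + 2"] finite_Q by (intro sum_mono2) auto
  also have "\<dots> = (\<Sum>u\<in>Q (n + 2). card (box3 u \<inter> periodic_code))"
    by (rule sum_card_Int_swap[OF finite_Q finite_Q box3_subset_Q, symmetric])
  also have "\<dots> = 2 * card (Q (n + 2))"
    by (simp add: card_box3_Int_periodic_code)
  finally show ?thesis .
qed

lemma density_periodic_code: "density periodic_code = ereal (2/9)"
proof (rule antisym)
  show "density periodic_code \<le> ereal (2/9)"
  proof (rule density_le_of_card_bound[where k = 2])
    fix n
    have "real (9 * card (periodic_code \<inter> Q n)) \<le> real (2 * card (Q (n + 2)))"
      by (simp only: of_nat_le_iff periodic_code_count_le)
    then show "real (card (periodic_code \<inter> Q n)) \<le> 2/9 * real (card (Q (n + 2)))"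
      by simp
  qed
  show "ereal (2/9) \<le> density periodic_code"
  proof (rule density_ge_of_card_bound[where k = 2])
    fix n
    have "real (2 * card (Q n)) \<le> real (9 * card (periodic_code \<inter> Q (n + 2)))"
      by (simp only: of_nat_le_iff periodic_code_count_ge)
    then show "2/9 * real (card (Q n)) \<le> real (card (periodic_code \<inter> Q (n + 2)))"
      by simp
  qed
qed

theorem mainTheorem15:
  shows "(\<forall>C. local_LD_code C \<longrightarrow> density C \<ge> ereal (2/11)) \<and>
         (\<exists>C. local_LD_code C \<and> density C = ereal (2/9)) \<and>
         ereal (2/11) \<le> gamma_LLD \<and> gamma_LLD \<le> ereal (2/9)"
proof (intro conjI)
  show "\<forall>C. local_LD_code C \<longrightarrow> density C \<ge> ereal (2/11)"
    using density_local_LD_code_ge by blast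
  show "\<exists>C. local_LD_code C \<and> density C = ereal (2/9)"
    using local_LD_code_periodic_code density_periodic_code by blast
  show "ereal (2/11) \<le> gamma_LLD"
    unfolding gamma_LLD_def by (rule Inf_greatest) (auto intro: density_local_LD_code_ge)
  have "gamma_LLD \<le> density periodic_code"
    unfolding gamma_LLD_def by (rule Inf_lower) (simp add: local_LD_code_periodic_code)
  then show "gamma_LLD \<le> ereal (2/9)"
    by (simp add: density_periodic_code)
qed

end
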